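(* Let $J$ be either a closed interval in $\mathbb{R}$ or a circle, and let $n\geq 3$. Then the set of injective maps in $\mathrm{CBV}^n_{\mathbb{R}}(J)$ is dense in $\mathrm{CBV}^n_{\mathbb{R}}(J)$ with respect to the norm $\|\cdot\|_{\mathrm{bv}}$.
   Context: $\mathrm{CBV}^n_{\mathbb{R}}(J)$ denotes the Banach space of continuous maps $F:J\to\mathbb{R}^n$ of bounded variation, with norm $\|F\|_{\mathrm{bv}}=\sup_J|F|+\mathrm{var}\,F$, where $\mathrm{var}\,F$ is the total variation of $F$ over $J$. *)

theory Defs
  imports "HOL-Analysis.Analysis"
begin

definition variation_sums :: "real \<Rightarrow> real \<Rightarrow> (real \<Rightarrow> 'a::real_normed_vector) \<Rightarrow> real set" where
  "variation_sums a b F =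
     {(\<Sum>i<m. norm (F (t (Suc i)) - F (t i))) | t m.
        t 0 = a \<and> t m = b \<and> (\<forall>i<m. t i \<le> t (Suc i))}"

definition total_variation :: "real \<Rightarrow> real \<Rightarrow> (real \<Rightarrow> 'a::real_normed_vector) \<Rightarrow> real" where
  "total_variation a b F = Sup (variation_sums a b F)"

definition has_bounded_variation_on_interval ::
    "real \<Rightarrow> real \<Rightarrow> (real \<Rightarrow> 'a::real_normed_vector) \<Rightarrow> bool" where
  "has_bounded_variation_on_interval a b F \<longleftrightarrow> bdd_above (variation_sums a b F)"

definition CBV_interval :: "real \<Rightarrow> real \<Rightarrow> (real \<Rightarrow> 'a::real_normed_vector) \<Rightarrow> bool" where
  "CBV_interval a b F \<longleftrightarrow> continuous_on {a..b} F \<and> has_bounded_variation_on_interval a b F"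

definition bv_norm_interval :: "real \<Rightarrow> real \<Rightarrow> (real \<Rightarrow> 'a::real_normed_vector) \<Rightarrow> real" where
  "bv_norm_interval a b F = (SUP t\<in>{a..b}. norm (F t)) + total_variation a b F"

(* The circle J = S^1 = sphere 0 1 in the complex plane; variation along the circle
   is the variation of F composed with the standard parametrisation t \<mapsto> exp(2 pi i t), t\<in>[0,1]. *)
definition circle_param :: "real \<Rightarrow> complex" where
  "circle_param t = cis (2 * pi * t)"

definition CBV_circle :: "(complex \<Rightarrow> 'a::real_normed_vector) \<Rightarrow> bool" where
  "CBV_circle F \<longleftrightarrow> continuous_on (sphere 0 1) F \<and>
      has_bounded_variation_on_interval 0 1 (F \<circ> circle_param)"

definition bv_norm_circle :: "(complex \<Rightarrow> 'a::real_normed_vector) \<Rightarrow> real" where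
  "bv_norm_circle F = (SUP z\<in>sphere 0 1. norm (F z)) + total_variation 0 1 (F \<circ> circle_param)"

end

theory Submission
  imports Defs
begin

(* Perturb F by a small linear term: G t = F t - t v on [a,b], G z = F z - (Re z v + Im z w) on
   the circle. If G t = G t' with t \<noteq> t', then v = (F t - F t') / (t - t'). Reparametrising by
   \<sigma> t = t + var[a,t] F makes both F and t 1-Lipschitz functions of \<sigma>, so where |t - t'| \<ge> 1/n and
   |F t - F t'| \<le> n the quotient is a Lipschitz function of (\<sigma> t, \<sigma> t') \<in> \<real>\<^sup>2. Countably
   many Lipschitz images of planar sets are null in \<real>\<^sup>n for n \<ge> 3, so arbitrarily small
   admissible v exist. On the circle, w is first chosen to separate points with equal real part;
   the quotients that v must then avoid depend on w. The perturbation is Lipschitz, hence small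
   in the bv-norm. *)

lemma variation_sumsI:
  assumes "p 0 = a" "p m = b" "\<forall>i<m. p i \<le> p (Suc i)"
  shows "(\<Sum>i<m. norm (F (p (Suc i)) - F (p i))) \<in> variation_sums a b F"
  using assms unfolding variation_sums_def by blast

lemma variation_sums_nonempty: "a \<le> b \<Longrightarrow> variation_sums a b F \<noteq> {}"
  using variation_sumsI[of "\<lambda>i. if i = 0 then a else b" a 1 b F] by auto

lemma variation_sums_extend:
  assumes "s \<in> variation_sums a t F" "t \<le> t'"
  shows "s + norm (F t' - F t) \<in> variation_sums a t' F"
proof -
  obtain p m where s: "s = (\<Sum>i<m. norm (F (p (Suc i)) - F (p i)))"
    and p: "p 0 = a" "p m = t" "\<forall>i<m. p i \<le> p (Suc i)"
    using assms(1) unfolding variation_sums_def by blast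
  define q where "q i = (if i \<le> m then p i else t')" for i
  have "(\<Sum>i<Suc m. norm (F (q (Suc i)) - F (q i))) = s + norm (F t' - F t)"
    using p by (simp add: s q_def)
  moreover have "q 0 = a" "q (Suc m) = t'" "\<forall>i<Suc m. q i \<le> q (Suc i)"
    using p assms(2) by (auto simp: q_def less_Suc_eq)
  ultimately show ?thesis
    using variation_sumsI[of q a "Suc m" t' F] by simp
qed

lemma bounded_variation_subinterval:
  assumes "has_bounded_variation_on_interval a b F" "t \<le> b"
  shows "bdd_above (variation_sums a t F)"
proof -
  obtain B where B: "\<And>s. s \<in> variation_sums a b F \<Longrightarrow> s \<le> B"
    using assms(1) unfolding has_bounded_variation_on_interval_def bdd_above_def by blast
  have "s \<le> B" if "s \<in> variation_sums a t F" for s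
    using B[OF variation_sums_extend[OF that assms(2)]] norm_ge_zero[of "F b - F t"] by linarith
  then show ?thesis
    unfolding bdd_above_def by blast
qed

lemma total_variation_extend:
  assumes "has_bounded_variation_on_interval a b F" "a \<le> t" "t \<le> t'" "t' \<le> b"
  shows "total_variation a t F + norm (F t' - F t) \<le> total_variation a t' F"
proof -
  have "s \<le> total_variation a t' F - norm (F t' - F t)" if "s \<in> variation_sums a t F" for s
    using cSup_upper[OF variation_sums_extend[OF that assms(3)]
        bounded_variation_subinterval[OF assms(1,4)]]
    unfolding total_variation_def by simp
  then have "total_variation a t F \<le> total_variation a t' F - norm (F t' - F t)"
    unfolding total_variation_def by (rule cSup_least[OF variation_sums_nonempty[OF assms(2)]])
  then show ?thesis by simp
qed

lemma bounded_variation_reparametrisation: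
  assumes "has_bounded_variation_on_interval a b H"
  obtains \<sigma> :: "real \<Rightarrow> real" where
    "\<And>t s. t \<in> {a..b} \<Longrightarrow> s \<in> {a..b} \<Longrightarrow> norm (H t - H s) \<le> \<bar>\<sigma> t - \<sigma> s\<bar>"
    "\<And>t s. t \<in> {a..b} \<Longrightarrow> s \<in> {a..b} \<Longrightarrow> \<bar>t - s\<bar> \<le> \<bar>\<sigma> t - \<sigma> s\<bar>"
proof
  define \<sigma> where "\<sigma> t = t + total_variation a t H" for t
  have ordered: "norm (H t - H s) \<le> \<sigma> t - \<sigma> s \<and> t - s \<le> \<sigma> t - \<sigma> s"
    if "s \<in> {a..b}" "t \<in> {a..b}" "s \<le> t" for s t
  proof -
    have "total_variation a s H + norm (H t - H s) \<le> total_variation a t H"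
      using total_variation_extend[OF assms, of s t] that by simp
    then show ?thesis
      unfolding \<sigma>_def using \<open>s \<le> t\<close> norm_ge_zero[of "H t - H s"] by (intro conjI; linarith)
  qed
  show "norm (H t - H s) \<le> \<bar>\<sigma> t - \<sigma> s\<bar>" "\<bar>t - s\<bar> \<le> \<bar>\<sigma> t - \<sigma> s\<bar>"
    if "t \<in> {a..b}" "s \<in> {a..b}" for t s
    using ordered[OF that] ordered[OF that(2,1)]
    by (cases "s \<le> t"; force simp: norm_minus_commute)+
qed

lemma Lipschitz_bounded_variation:
  assumes "\<And>x y. norm (f x - f y) \<le> L * \<bar>x - y\<bar>" "a \<le> b"
  shows "has_bounded_variation_on_interval a b f" "total_variation a b f \<le> L * (b - a)"
proof -
  have sums_le: "s \<le> L * (b - a)" if sum: "s \<in> variation_sums a b f" for s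
  proof -
    obtain p m where s: "s = (\<Sum>i<m. norm (f (p (Suc i)) - f (p i)))"
      and p: "p 0 = a" "p m = b" "\<forall>i<m. p i \<le> p (Suc i)"
      using sum unfolding variation_sums_def by blast
    have "s \<le> (\<Sum>i<m. L * (p (Suc i) - p i))"
      unfolding s using p assms(1) by (intro sum_mono) (smt (verit) lessThan_iff)
    also have "\<dots> = L * (b - a)"
      by (simp add: sum_distrib_left[symmetric] sum_lessThan_telescope p)
    finally show ?thesis .
  qed
  then show "has_bounded_variation_on_interval a b f"
    unfolding has_bounded_variation_on_interval_def bdd_above_def by blast
  show "total_variation a b f \<le> L * (b - a)"
    unfolding total_variation_def using sums_le
    by (rule cSup_least[OF variation_sums_nonempty[OF assms(2)]])
qed

lemma bounded_variation_diff:
  assumes "has_bounded_variation_on_interval a b F" "has_bounded_variation_on_interval a b G"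
  shows "has_bounded_variation_on_interval a b (\<lambda>t. F t - G t)"
proof -
  obtain B1 B2 where B1: "\<And>s. s \<in> variation_sums a b F \<Longrightarrow> s \<le> B1"
    and B2: "\<And>s. s \<in> variation_sums a b G \<Longrightarrow> s \<le> B2"
    using assms unfolding has_bounded_variation_on_interval_def bdd_above_def by meson
  have "s \<le> B1 + B2" if sum: "s \<in> variation_sums a b (\<lambda>t. F t - G t)" for s
  proof -
    obtain p m where s: "s = (\<Sum>i<m. norm (F (p (Suc i)) - G (p (Suc i)) - (F (p i) - G (p i))))"
      and p: "p 0 = a" "p m = b" "\<forall>i<m. p i \<le> p (Suc i)"
      using sum unfolding variation_sums_def by blast
    have "s \<le> (\<Sum>i<m. norm (F (p (Suc i)) - F (p i)) + norm (G (p (Suc i)) - G (p i)))"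
      unfolding s
    proof (rule sum_mono)
      fix i
      have "F (p (Suc i)) - G (p (Suc i)) - (F (p i) - G (p i))
          = (F (p (Suc i)) - F (p i)) - (G (p (Suc i)) - G (p i))"
        by (simp add: algebra_simps)
      then show "norm (F (p (Suc i)) - G (p (Suc i)) - (F (p i) - G (p i)))
          \<le> norm (F (p (Suc i)) - F (p i)) + norm (G (p (Suc i)) - G (p i))"
        by (simp only: norm_triangle_ineq4)
    qed
    also have "\<dots> \<le> B1 + B2"
      unfolding sum.distrib using B1[OF variation_sumsI[OF p]] B2[OF variation_sumsI[OF p]]
      by (rule add_mono)
    finally show ?thesis .
  qed
  then show ?thesis
    unfolding has_bounded_variation_on_interval_def bdd_above_def by blast
qed

lemma negligible_Lipschitz_image_lowdim:
  fixes f :: "'M::euclidean_space \<Rightarrow> 'N::euclidean_space"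
  assumes "DIM('M) < DIM('N)"
    and lip: "\<And>x y. x \<in> S \<Longrightarrow> y \<in> S \<Longrightarrow> norm (f x - f y) \<le> B * norm (x - y)"
  shows "negligible (f ` S)"
proof -
  obtain lift :: "'M \<times> real \<Rightarrow> 'N" and drop :: "'N \<Rightarrow> 'M \<times> real" and j :: 'N
    where "linear drop" and drop_lift: "\<And>z. drop (lift z) = z"
      and "j \<in> Basis" and j: "\<And>x. lift (x, 0) \<bullet> j = 0"
    using lowerdim_embeddings[OF assms(1)] by metis
  obtain C where C: "\<And>y. norm (drop y) \<le> C * norm y"
    using linear_bounded_pos[OF \<open>linear drop\<close>] by metis
  define T where "T = (\<lambda>x. lift (x, 0)) ` S"
  define g where "g y = f (fst (drop y))" for y
  have "T \<subseteq> {x. x \<bullet> j = 0}"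
    using j unfolding T_def by auto
  then have "negligible T"
    by (rule negligible_subset[OF negligible_standard_hyperplane[OF \<open>j \<in> Basis\<close>]])
  moreover have "norm (g y - g x) \<le> (\<bar>B\<bar> * C) * norm (y - x)" if "y \<in> T" "x \<in> T" for x y
  proof -
    have "fst (drop y) \<in> S" "fst (drop x) \<in> S"
      using that by (auto simp: T_def drop_lift)
    then have "norm (g y - g x) \<le> B * norm (fst (drop y) - fst (drop x))"
      unfolding g_def by (rule lip)
    also have "\<dots> \<le> \<bar>B\<bar> * norm (fst (drop y) - fst (drop x))"
      by (simp add: mult_right_mono)
    also have "\<dots> \<le> \<bar>B\<bar> * norm (drop (y - x))"
      using norm_fst_le[of "fst (drop (y - x))" "snd (drop (y - x))"]
      unfolding prod.collapse by (intro mult_left_mono) (simp_all add: linear_diff[OF \<open>linear drop\<close>])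
    also have "\<dots> \<le> \<bar>B\<bar> * (C * norm (y - x))"
      by (simp add: C mult_left_mono)
    finally show ?thesis by simp
  qed
  ultimately have "negligible (g ` T)"
    by (intro negligible_locally_Lipschitz_image[of T g] order_refl exI[of _ UNIV] exI[of _ "\<bar>B\<bar> * C"]) auto
  moreover have "g ` T = f ` S"
    unfolding T_def g_def by (simp add: image_image drop_lift)
  ultimately show ?thesis by simp
qed

lemma negligible_image_Lipschitz_lowdim_coordinates:
  fixes \<phi> :: "'a \<Rightarrow> 'M::euclidean_space" and g :: "'a \<Rightarrow> 'N::euclidean_space"
  assumes "DIM('M) < DIM('N)"
    and lip: "\<And>x y. x \<in> S \<Longrightarrow> y \<in> S \<Longrightarrow> norm (g x - g y) \<le> B * norm (\<phi> x - \<phi> y)"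
  shows "negligible (g ` S)"
proof -
  define h where "h = g \<circ> inv_into S \<phi>"
  have h: "h (\<phi> x) = g x" if "x \<in> S" for x
  proof -
    have "norm (h (\<phi> x) - g x) \<le> B * norm (\<phi> (inv_into S \<phi> (\<phi> x)) - \<phi> x)"
      unfolding h_def o_def using that by (intro lip inv_into_into) auto
    then show ?thesis
      using that by (simp add: f_inv_into_f)
  qed
  have "negligible (h ` \<phi> ` S)"
  proof (rule negligible_Lipschitz_image_lowdim[OF assms(1)])
    fix u v assume "u \<in> \<phi> ` S" "v \<in> \<phi> ` S"
    then obtain x y where "x \<in> S" "y \<in> S" "u = \<phi> x" "v = \<phi> y"
      by blast
    then show "norm (h u - h v) \<le> B * norm (u - v)"
      using lip[of x y] h by simp
  qed
  moreover have "h ` \<phi> ` S = g ` S"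
    by (simp add: image_image h)
  ultimately show ?thesis by simp
qed

lemma norm_inverse_scaleR_diff_le:
  fixes x y :: "'a::real_normed_vector"
  assumes "0 < \<epsilon>" "\<epsilon> \<le> \<bar>c\<bar>" "\<epsilon> \<le> \<bar>d\<bar>"
    and "norm y \<le> M" "norm (x - y) \<le> D" "\<bar>c - d\<bar> \<le> D"
  shows "norm (inverse c *\<^sub>R x - inverse d *\<^sub>R y) \<le> (1 / \<epsilon> + M / \<epsilon>\<^sup>2) * D"
proof -
  have "c \<noteq> 0" "d \<noteq> 0"
    using assms(1-3) by auto
  have "0 \<le> M" "0 \<le> D"
    using assms(4,5) norm_ge_zero[of y] norm_ge_zero[of "x - y"] by linarith+
  have "inverse c - inverse d = (d - c) / (c * d)"
    using \<open>c \<noteq> 0\<close> \<open>d \<noteq> 0\<close> by (simp add: field_simps)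
  then have split: "inverse c *\<^sub>R x - inverse d *\<^sub>R y = inverse c *\<^sub>R (x - y) + ((d - c) / (c * d)) *\<^sub>R y"
    by (simp add: algebra_simps flip: scaleR_diff_left)
  have "norm (inverse c *\<^sub>R (x - y)) = norm (x - y) / \<bar>c\<bar>"
    by (simp add: divide_inverse_commute)
  also have "\<dots> \<le> D / \<epsilon>"
    using assms by (intro frac_le) auto
  finally have first: "norm (inverse c *\<^sub>R (x - y)) \<le> D / \<epsilon>" .
  have "norm (((d - c) / (c * d)) *\<^sub>R y) = norm y * \<bar>c - d\<bar> / (\<bar>c\<bar> * \<bar>d\<bar>)"
    by (simp add: abs_mult abs_minus_commute)
  also have "\<dots> \<le> M * D / \<epsilon>\<^sup>2"
  proof (intro frac_le mult_mono)
    show "0 \<le> M * D"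
      using \<open>0 \<le> M\<close> \<open>0 \<le> D\<close> by simp
    show "\<epsilon>\<^sup>2 \<le> \<bar>c\<bar> * \<bar>d\<bar>"
      unfolding power2_eq_square using assms(1-3) by (intro mult_mono) auto
  qed (use assms \<open>0 \<le> M\<close> in auto)
  finally have second: "norm (((d - c) / (c * d)) *\<^sub>R y) \<le> M * D / \<epsilon>\<^sup>2" .
  have "norm (inverse c *\<^sub>R x - inverse d *\<^sub>R y) \<le> D / \<epsilon> + M * D / \<epsilon>\<^sup>2"
    unfolding split by (rule order_trans[OF norm_triangle_ineq add_mono[OF first second]])
  also have "\<dots> = (1 / \<epsilon> + M / \<epsilon>\<^sup>2) * D"
    by (simp add: distrib_right)
  finally show ?thesis .
qed

lemma ex_inverse_Suc_le_and_ge: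
  fixes x y :: real
  assumes "0 < x"
  shows "\<exists>n. inverse (real (Suc n)) \<le> x \<and> y \<le> real n"
proof -
  obtain n1 where n1: "inverse (real (Suc n1)) < x"
    using reals_Archimedean[OF assms] by blast
  obtain n2 where n2: "y \<le> real n2"
    using real_arch_simple by blast
  have "inverse (real (Suc (n1 + n2))) \<le> inverse (real (Suc n1))"
    by (simp add: le_imp_inverse_le)
  then have "inverse (real (Suc (n1 + n2))) \<le> x"
    using n1 by linarith
  moreover have "y \<le> real (n1 + n2)"
    using n2 by simp
  ultimately show ?thesis by blast
qed

lemma negligible_quotients_Lipschitz_lowdim_coordinates:
  fixes \<phi> :: "'a \<Rightarrow> 'M::euclidean_space" and N :: "'a \<Rightarrow> 'N::euclidean_space" and d :: "'a \<Rightarrow> real"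
  assumes "DIM('M) < DIM('N)"
    and N: "\<And>x y. x \<in> S \<Longrightarrow> y \<in> S \<Longrightarrow> norm (N x - N y) \<le> K * norm (\<phi> x - \<phi> y)"
    and d: "\<And>x y. x \<in> S \<Longrightarrow> y \<in> S \<Longrightarrow> \<bar>d x - d y\<bar> \<le> K * norm (\<phi> x - \<phi> y)"
  shows "negligible ((\<lambda>x. inverse (d x) *\<^sub>R N x) ` {x \<in> S. d x \<noteq> 0})"
proof -
  define S' where "S' n = {x \<in> S. inverse (Suc n) \<le> \<bar>d x\<bar> \<and> norm (N x) \<le> n}" for n :: nat
  have "negligible ((\<lambda>x. inverse (d x) *\<^sub>R N x) ` S' n)" for n
  proof (rule negligible_image_Lipschitz_lowdim_coordinates[OF assms(1)])
    fix x y assume "x \<in> S' n" "y \<in> S' n"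
    then have "x \<in> S" "y \<in> S" "inverse (Suc n) \<le> \<bar>d x\<bar>" "inverse (Suc n) \<le> \<bar>d y\<bar>" "norm (N y) \<le> n"
      unfolding S'_def by auto
    then show "norm (inverse (d x) *\<^sub>R N x - inverse (d y) *\<^sub>R N y)
        \<le> ((1 / inverse (Suc n) + n / (inverse (Suc n))\<^sup>2) * K) * norm (\<phi> x - \<phi> y)"
      unfolding mult.assoc
      by (intro norm_inverse_scaleR_diff_le[OF _ _ _ _ N d]) simp_all
  qed
  then have "negligible (\<Union>n. (\<lambda>x. inverse (d x) *\<^sub>R N x) ` S' n)"
    by (rule negligible_Union_nat)
  moreover have "x \<in> (\<Union>n. S' n)" if "x \<in> S" "d x \<noteq> 0" for x
    using ex_inverse_Suc_le_and_ge[of "\<bar>d x\<bar>" "norm (N x)"] that unfolding S'_def by auto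
  then have "(\<lambda>x. inverse (d x) *\<^sub>R N x) ` {x \<in> S. d x \<noteq> 0}
      \<subseteq> (\<Union>n. (\<lambda>x. inverse (d x) *\<^sub>R N x) ` S' n)"
    by blast
  ultimately show ?thesis
    by (rule negligible_subset)
qed

(* v lies in this set iff H t - H t' = c t t' + d t t' v for some t, t' with d t t' \<noteq> 0, i.e. iff
   subtracting from H a perturbation with increments c t t' + d t t' v leaves t, t' unseparated. *)
definition difference_quotients ::
    "real \<Rightarrow> real \<Rightarrow> (real \<Rightarrow> 'a::real_normed_vector) \<Rightarrow> (real \<Rightarrow> real \<Rightarrow> 'a) \<Rightarrow> (real \<Rightarrow> real \<Rightarrow> real) \<Rightarrow> 'a set"
  where "difference_quotients a b H c d =
    {inverse (d t t') *\<^sub>R (H t - H t' - c t t') | t t'. t \<in> {a..b} \<and> t' \<in> {a..b} \<and> d t t' \<noteq> 0}"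

lemma difference_quotientsI:
  assumes "t \<in> {a..b}" "t' \<in> {a..b}" "d t t' \<noteq> 0" "H t - H t' - c t t' = d t t' *\<^sub>R v"
  shows "v \<in> difference_quotients a b H c d"
  using assms unfolding difference_quotients_def by force

lemma sum_abs_diff_le_norm_pair:
  fixes x y x' y' :: real
  shows "\<bar>x - x'\<bar> + \<bar>y - y'\<bar> \<le> 2 * norm ((x, y) - (x', y'))"
  using norm_fst_le[of "x - x'" "y - y'"] norm_snd_le[of "y - y'" "x - x'"] by simp

lemma negligible_difference_quotients:
  fixes H :: "real \<Rightarrow> 'a::euclidean_space"
  assumes "2 < DIM('a)" "has_bounded_variation_on_interval a b H" "0 \<le> L"
    and c: "\<And>t t' s s'. norm (c t t' - c s s') \<le> L * (\<bar>t - s\<bar> + \<bar>t' - s'\<bar>)"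
    and d: "\<And>t t' s s'. \<bar>d t t' - d s s'\<bar> \<le> L * (\<bar>t - s\<bar> + \<bar>t' - s'\<bar>)"
  shows "negligible (difference_quotients a b H c d)"
proof -
  obtain \<sigma> :: "real \<Rightarrow> real" where
    \<sigma>H: "\<And>t s. t \<in> {a..b} \<Longrightarrow> s \<in> {a..b} \<Longrightarrow> norm (H t - H s) \<le> \<bar>\<sigma> t - \<sigma> s\<bar>" and
    \<sigma>t: "\<And>t s. t \<in> {a..b} \<Longrightarrow> s \<in> {a..b} \<Longrightarrow> \<bar>t - s\<bar> \<le> \<bar>\<sigma> t - \<sigma> s\<bar>"
    using bounded_variation_reparametrisation[OF assms(2)] by blast
  define \<phi> where "\<phi> = (\<lambda>(t, t'). (\<sigma> t, \<sigma> t'))"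
  define N where "N = (\<lambda>(t, t'). H t - H t' - c t t')"
  have "negligible ((\<lambda>p. inverse (case_prod d p) *\<^sub>R N p) ` {p \<in> {a..b} \<times> {a..b}. case_prod d p \<noteq> 0})"
  proof (rule negligible_quotients_Lipschitz_lowdim_coordinates[where \<phi> = \<phi> and K = "2 + 2 * L"])
    show "DIM(real \<times> real) < DIM('a)"
      using assms(1) by simp
    fix p q assume "p \<in> {a..b} \<times> {a..b}" "q \<in> {a..b} \<times> {a..b}"
    then obtain t t' s s' where pq: "p = (t, t')" "q = (s, s')"
      and ts: "t \<in> {a..b}" "t' \<in> {a..b}" "s \<in> {a..b}" "s' \<in> {a..b}"
      by auto
    have \<sigma>_le: "\<bar>\<sigma> t - \<sigma> s\<bar> + \<bar>\<sigma> t' - \<sigma> s'\<bar> \<le> 2 * norm (\<phi> p - \<phi> q)"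
      using sum_abs_diff_le_norm_pair by (simp add: \<phi>_def pq)
    then have L_le: "L * (\<bar>t - s\<bar> + \<bar>t' - s'\<bar>) \<le> L * (2 * norm (\<phi> p - \<phi> q))"
      using \<sigma>t[OF ts(1,3)] \<sigma>t[OF ts(2,4)] assms(3) by (intro mult_left_mono) auto
    have "N p - N q = (H t - H s) - (H t' - H s') - (c t t' - c s s')"
      by (simp add: N_def pq algebra_simps)
    then have "norm (N p - N q) \<le> norm (H t - H s) + norm (H t' - H s') + norm (c t t' - c s s')"
      by (simp only: order_trans[OF norm_triangle_ineq4 add_right_mono[OF norm_triangle_ineq4]])
    also have "\<dots> \<le> \<bar>\<sigma> t - \<sigma> s\<bar> + \<bar>\<sigma> t' - \<sigma> s'\<bar> + L * (\<bar>t - s\<bar> + \<bar>t' - s'\<bar>)"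
      by (rule add_mono[OF add_mono[OF \<sigma>H[OF ts(1,3)] \<sigma>H[OF ts(2,4)]] c])
    finally show "norm (N p - N q) \<le> (2 + 2 * L) * norm (\<phi> p - \<phi> q)"
      using \<sigma>_le L_le by (simp add: algebra_simps)
    have "\<bar>case_prod d p - case_prod d q\<bar> \<le> L * (2 * norm (\<phi> p - \<phi> q))"
      using order_trans[OF d L_le] by (simp add: pq)
    also have "\<dots> \<le> (2 + 2 * L) * norm (\<phi> p - \<phi> q)"
      by (simp add: algebra_simps)
    finally show "\<bar>case_prod d p - case_prod d q\<bar> \<le> (2 + 2 * L) * norm (\<phi> p - \<phi> q)" .
  qed
  moreover have "(\<lambda>p. inverse (case_prod d p) *\<^sub>R N p) ` {p \<in> {a..b} \<times> {a..b}. case_prod d p \<noteq> 0}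
      = difference_quotients a b H c d"
    by (auto simp: N_def image_def difference_quotients_def)
  ultimately show ?thesis by simp
qed

lemma abs_increment_diff_le:
  fixes f :: "real \<Rightarrow> real"
  assumes "\<And>x y. \<bar>f x - f y\<bar> \<le> L * \<bar>x - y\<bar>"
  shows "\<bar>(f t - f t') - (f s - f s')\<bar> \<le> L * (\<bar>t - s\<bar> + \<bar>t' - s'\<bar>)"
proof -
  have "\<bar>(f t - f t') - (f s - f s')\<bar> \<le> \<bar>f t - f s\<bar> + \<bar>f t' - f s'\<bar>"
    by arith
  also have "\<dots> \<le> L * \<bar>t - s\<bar> + L * \<bar>t' - s'\<bar>"
    by (intro add_mono assms)
  finally show ?thesis
    by (simp add: distrib_left)
qed

lemma exists_small_not_in_negligible:
  fixes N :: "'a::euclidean_space set"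
  assumes "negligible N" "0 < r"
  obtains v where "norm v < r" "v \<notin> N"
proof -
  have "\<not> ball 0 r \<subseteq> N"
    using assms open_not_negligible[of "ball (0::'a) r"] negligible_subset by auto
  then obtain v where "v \<in> ball 0 r" "v \<notin> N"
    by blast
  then show ?thesis
    using that by (simp add: dist_norm)
qed

lemma inj_on_diff_scaleR:
  assumes "v \<notin> difference_quotients a b F (\<lambda>_ _. 0) (\<lambda>t t'. t - t')"
  shows "inj_on (\<lambda>t. F t - t *\<^sub>R v) {a..b}"
proof (rule inj_onI, rule ccontr)
  fix t t' assume t: "t \<in> {a..b}" "t' \<in> {a..b}" "t \<noteq> t'"
    and eq: "F t - t *\<^sub>R v = F t' - t' *\<^sub>R v"
  have "F t - F t' - 0 = (t - t') *\<^sub>R v"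
    using eq by (simp add: algebra_simps)
  then have "v \<in> difference_quotients a b F (\<lambda>_ _. 0) (\<lambda>t t'. t - t')"
    using t by (intro difference_quotientsI) auto
  then show False
    using assms by blast
qed

lemma bv_norm_interval_scaleR_le:
  assumes "a \<le> b"
  shows "bv_norm_interval a b (\<lambda>t. t *\<^sub>R v) \<le> (\<bar>a\<bar> + \<bar>b\<bar> + (b - a)) * norm v"
proof -
  have "norm (t *\<^sub>R v) \<le> (\<bar>a\<bar> + \<bar>b\<bar>) * norm v" if "t \<in> {a..b}" for t
  proof -
    have "\<bar>t\<bar> \<le> \<bar>a\<bar> + \<bar>b\<bar>"
      using that by auto
    then show ?thesis
      by (simp add: mult_right_mono)
  qed
  then have "(SUP t\<in>{a..b}. norm (t *\<^sub>R v)) \<le> (\<bar>a\<bar> + \<bar>b\<bar>) * norm v"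
    using assms by (intro cSUP_least) auto
  moreover have "total_variation a b (\<lambda>t. t *\<^sub>R v) \<le> norm v * (b - a)"
    using assms by (intro Lipschitz_bounded_variation(2)) (simp_all flip: scaleR_diff_left)
  ultimately show ?thesis
    unfolding bv_norm_interval_def by (simp add: algebra_simps)
qed

lemma CBV_interval_diff_scaleR:
  assumes "a \<le> b" "CBV_interval a b F"
  shows "CBV_interval a b (\<lambda>t. F t - t *\<^sub>R v)"
proof -
  have "norm (x *\<^sub>R v - y *\<^sub>R v) \<le> norm v * \<bar>x - y\<bar>" for x y
    by (simp add: mult.commute flip: scaleR_diff_left)
  then have "has_bounded_variation_on_interval a b (\<lambda>t. t *\<^sub>R v)"
    using assms(1) by (rule Lipschitz_bounded_variation(1))
  then have "has_bounded_variation_on_interval a b (\<lambda>t. F t - t *\<^sub>R v)"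
    using assms(2) unfolding CBV_interval_def by (intro bounded_variation_diff) auto
  then show ?thesis
    using assms(2) unfolding CBV_interval_def by (auto intro!: continuous_intros)
qed

lemma injective_approximation_interval:
  fixes F :: "real \<Rightarrow> 'a::euclidean_space"
  assumes "a < b" "2 < DIM('a)" "CBV_interval a b F" "0 < e"
  shows "\<exists>G. CBV_interval a b G \<and> inj_on G {a..b} \<and> bv_norm_interval a b (\<lambda>t. F t - G t) < e"
proof -
  have bv: "has_bounded_variation_on_interval a b F"
    using assms(3) by (simp add: CBV_interval_def)
  have "negligible (difference_quotients a b F (\<lambda>_ _. 0) (\<lambda>t t'. t - t'))"
    using assms(2) bv by (rule negligible_difference_quotients[where L = 1])
      (simp_all add: abs_increment_diff_le[where L = 1])
  moreover define K where "K = \<bar>a\<bar> + \<bar>b\<bar> + (b - a) + 1"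
  moreover have "0 < K"
    unfolding K_def using assms(1) by simp
  ultimately obtain v where v: "norm v < e / K" "v \<notin> difference_quotients a b F (\<lambda>_ _. 0) (\<lambda>t t'. t - t')"
    using exists_small_not_in_negligible[OF _ divide_pos_pos[OF assms(4)]] by blast
  have "CBV_interval a b (\<lambda>t. F t - t *\<^sub>R v)"
    using assms(1,3) by (intro CBV_interval_diff_scaleR) auto
  moreover have "bv_norm_interval a b (\<lambda>t. F t - (F t - t *\<^sub>R v)) < e"
  proof -
    have "bv_norm_interval a b (\<lambda>t. F t - (F t - t *\<^sub>R v)) \<le> (\<bar>a\<bar> + \<bar>b\<bar> + (b - a)) * norm v"
      using bv_norm_interval_scaleR_le[of a b v] assms(1) by simp
    also have "\<dots> \<le> K * norm v"
      unfolding K_def by (simp add: algebra_simps)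
    also have "\<dots> < K * (e / K)"
      using v(1) \<open>0 < K\<close> by (rule mult_strict_left_mono)
    finally show ?thesis
      using \<open>0 < K\<close> by simp
  qed
  ultimately show ?thesis
    using inj_on_diff_scaleR[OF v(2)] by blast
qed

lemma abs_cos_diff_le: "\<bar>cos (x::real) - cos y\<bar> \<le> \<bar>x - y\<bar>"
proof -
  have "\<bar>cos x - cos y\<bar> = 2 * \<bar>sin ((x + y) / 2)\<bar> * \<bar>sin ((y - x) / 2)\<bar>"
    by (simp add: cos_diff_cos abs_mult)
  also have "\<dots> \<le> 2 * 1 * \<bar>(y - x) / 2\<bar>"
    by (intro mult_mono abs_sin_x_le_abs_x) auto
  finally show ?thesis by simp
qed

lemma abs_sin_diff_le: "\<bar>sin (x::real) - sin y\<bar> \<le> \<bar>x - y\<bar>"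
proof -
  have "\<bar>sin x - sin y\<bar> = 2 * \<bar>sin ((x - y) / 2)\<bar> * \<bar>cos ((x + y) / 2)\<bar>"
    by (simp add: sin_diff_sin abs_mult)
  also have "\<dots> \<le> 2 * \<bar>(x - y) / 2\<bar> * 1"
    by (intro mult_mono abs_sin_x_le_abs_x) auto
  finally show ?thesis by simp
qed

lemma circle_param_Re_diff_le: "\<bar>Re (circle_param x) - Re (circle_param y)\<bar> \<le> 2 * pi * \<bar>x - y\<bar>"
  using abs_cos_diff_le[of "2 * pi * x" "2 * pi * y"]
  by (simp add: circle_param_def right_diff_distrib[symmetric] abs_mult)

lemma circle_param_Im_diff_le: "\<bar>Im (circle_param x) - Im (circle_param y)\<bar> \<le> 2 * pi * \<bar>x - y\<bar>"
  using abs_sin_diff_le[of "2 * pi * x" "2 * pi * y"]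
  by (simp add: circle_param_def right_diff_distrib[symmetric] abs_mult)

lemma sphere_subset_circle_param_image: "sphere 0 1 \<subseteq> circle_param ` {0..1}"
proof
  fix z :: complex assume "z \<in> sphere 0 1"
  then have "z = exp (\<i> * of_real (Arg2pi z))"
    using Arg2pi[of z] by (simp add: is_Arg_def)
  then have "circle_param (Arg2pi z / (2 * pi)) = z"
    by (simp add: circle_param_def cis_conv_exp)
  moreover have "Arg2pi z / (2 * pi) \<in> {0..1}"
    using Arg2pi[of z] by auto
  ultimately show "z \<in> circle_param ` {0..1}"
    by (metis image_eqI)
qed

lemma circle_combination_Lipschitz:
  fixes v w :: "'a::real_normed_vector"
  shows "norm ((Re (circle_param x) *\<^sub>R v + Im (circle_param x) *\<^sub>R w)
             - (Re (circle_param y) *\<^sub>R v + Im (circle_param y) *\<^sub>R w))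
         \<le> 2 * pi * (norm v + norm w) * \<bar>x - y\<bar>"
proof -
  have "(Re (circle_param x) *\<^sub>R v + Im (circle_param x) *\<^sub>R w)
          - (Re (circle_param y) *\<^sub>R v + Im (circle_param y) *\<^sub>R w)
      = (Re (circle_param x) - Re (circle_param y)) *\<^sub>R v
          + (Im (circle_param x) - Im (circle_param y)) *\<^sub>R w"
    by (simp add: algebra_simps)
  also have "norm \<dots> \<le> \<bar>Re (circle_param x) - Re (circle_param y)\<bar> * norm v
                       + \<bar>Im (circle_param x) - Im (circle_param y)\<bar> * norm w"
    by (rule order_trans[OF norm_triangle_ineq]) simp
  also have "\<dots> \<le> (2 * pi * \<bar>x - y\<bar>) * norm v + (2 * pi * \<bar>x - y\<bar>) * norm w"
    by (intro add_mono mult_right_mono circle_param_Re_diff_le circle_param_Im_diff_le) auto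
  also have "\<dots> = 2 * pi * (norm v + norm w) * \<bar>x - y\<bar>"
    by (simp add: algebra_simps)
  finally show ?thesis .
qed

definition circle_increment :: "(complex \<Rightarrow> real) \<Rightarrow> real \<Rightarrow> real \<Rightarrow> real" where
  "circle_increment f t t' = f (circle_param t) - f (circle_param t')"

lemma negligible_circle_difference_quotients:
  fixes H :: "real \<Rightarrow> 'a::euclidean_space"
  assumes "2 < DIM('a)" "has_bounded_variation_on_interval 0 1 H"
  shows "negligible (difference_quotients 0 1 H (\<lambda>_ _. 0) (circle_increment Im))"
    and "negligible (difference_quotients 0 1 H
           (\<lambda>t t'. circle_increment Im t t' *\<^sub>R w) (circle_increment Re))"
proof -
  have Re: "\<bar>circle_increment Re t t' - circle_increment Re s s'\<bar> \<le> 2 * pi * (\<bar>t - s\<bar> + \<bar>t' - s'\<bar>)"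
    for t t' s s'
    unfolding circle_increment_def
    by (rule abs_increment_diff_le[where f = "\<lambda>x. Re (circle_param x)"]) (rule circle_param_Re_diff_le)
  have Im: "\<bar>circle_increment Im t t' - circle_increment Im s s'\<bar> \<le> 2 * pi * (\<bar>t - s\<bar> + \<bar>t' - s'\<bar>)"
    for t t' s s'
    unfolding circle_increment_def
    by (rule abs_increment_diff_le[where f = "\<lambda>x. Im (circle_param x)"]) (rule circle_param_Im_diff_le)
  show "negligible (difference_quotients 0 1 H (\<lambda>_ _. 0) (circle_increment Im))"
    using assms by (rule negligible_difference_quotients[where L = "2 * pi"]) (simp_all add: Im)
  show "negligible (difference_quotients 0 1 H
          (\<lambda>t t'. circle_increment Im t t' *\<^sub>R w) (circle_increment Re))"
    using assms
  proof (rule negligible_difference_quotients[where L = "2 * pi * (1 + norm w)"])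
    fix t t' s s' :: real
    have "norm (circle_increment Im t t' *\<^sub>R w - circle_increment Im s s' *\<^sub>R w)
        = \<bar>circle_increment Im t t' - circle_increment Im s s'\<bar> * norm w"
      by (simp flip: scaleR_diff_left)
    also have "\<dots> \<le> 2 * pi * (\<bar>t - s\<bar> + \<bar>t' - s'\<bar>) * (1 + norm w)"
      using Im[of t t' s s'] by (intro mult_mono) auto
    finally show "norm (circle_increment Im t t' *\<^sub>R w - circle_increment Im s s' *\<^sub>R w)
        \<le> 2 * pi * (1 + norm w) * (\<bar>t - s\<bar> + \<bar>t' - s'\<bar>)"
      by (simp add: algebra_simps)
    show "\<bar>circle_increment Re t t' - circle_increment Re s s'\<bar>
        \<le> 2 * pi * (1 + norm w) * (\<bar>t - s\<bar> + \<bar>t' - s'\<bar>)"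
      by (rule order_trans[OF Re]) (intro mult_right_mono; simp add: algebra_simps)
  qed simp
qed

lemma inj_on_diff_circle_combination:
  assumes "w \<notin> difference_quotients 0 1 (F \<circ> circle_param) (\<lambda>_ _. 0) (circle_increment Im)"
    and "v \<notin> difference_quotients 0 1 (F \<circ> circle_param)
               (\<lambda>t t'. circle_increment Im t t' *\<^sub>R w) (circle_increment Re)"
  shows "inj_on (\<lambda>z. F z - (Re z *\<^sub>R v + Im z *\<^sub>R w)) (sphere 0 1)"
proof (rule inj_onI, rule ccontr)
  fix z z' assume zz: "z \<in> sphere 0 1" "z' \<in> sphere 0 1" "z \<noteq> z'"
    and eq: "F z - (Re z *\<^sub>R v + Im z *\<^sub>R w) = F z' - (Re z' *\<^sub>R v + Im z' *\<^sub>R w)"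
  obtain t t' where t: "t \<in> {0..1}" "t' \<in> {0..1}" and z: "z = circle_param t" "z' = circle_param t'"
    using sphere_subset_circle_param_image zz(1,2) by (meson imageE subsetD)
  have diff: "F z - F z' = (Re z - Re z') *\<^sub>R v + (Im z - Im z') *\<^sub>R w"
    using eq by (simp add: algebra_simps)
  show False
  proof (cases "Re z = Re z'")
    case True
    then have "Im z \<noteq> Im z'"
      using zz(3) complex_eqI by blast
    then have "w \<in> difference_quotients 0 1 (F \<circ> circle_param) (\<lambda>_ _. 0) (circle_increment Im)"
      using t diff True unfolding z by (intro difference_quotientsI) (auto simp: circle_increment_def)
    then show False
      using assms(1) by blast
  next
    case False
    then have "v \<in> difference_quotients 0 1 (F \<circ> circle_param)
                 (\<lambda>t t'. circle_increment Im t t' *\<^sub>R w) (circle_increment Re)"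
      using t diff unfolding z by (intro difference_quotientsI) (auto simp: circle_increment_def)
    then show False
      using assms(2) by blast
  qed
qed

lemma bv_norm_circle_combination_le:
  "bv_norm_circle (\<lambda>z. Re z *\<^sub>R v + Im z *\<^sub>R w) \<le> (1 + 2 * pi) * (norm v + norm w)"
proof -
  have "norm (Re z *\<^sub>R v + Im z *\<^sub>R w) \<le> norm v + norm w" if "z \<in> sphere 0 1" for z :: complex
  proof -
    have "\<bar>Re z\<bar> \<le> 1" "\<bar>Im z\<bar> \<le> 1"
      using that abs_Re_le_cmod[of z] abs_Im_le_cmod[of z] by auto
    then show ?thesis
      by (intro order_trans[OF norm_triangle_ineq] add_mono) (auto intro: mult_left_le_one_le)
  qed
  then have "(SUP z\<in>sphere 0 1. norm (Re z *\<^sub>R v + Im z *\<^sub>R w)) \<le> norm v + norm w"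
    by (intro cSUP_least) auto
  moreover have "total_variation 0 1 ((\<lambda>z. Re z *\<^sub>R v + Im z *\<^sub>R w) \<circ> circle_param)
      \<le> 2 * pi * (norm v + norm w) * (1 - 0)"
    by (rule Lipschitz_bounded_variation(2)) (simp_all add: circle_combination_Lipschitz)
  ultimately show ?thesis
    unfolding bv_norm_circle_def by (simp add: algebra_simps)
qed

lemma CBV_circle_diff_combination:
  assumes "CBV_circle F"
  shows "CBV_circle (\<lambda>z. F z - (Re z *\<^sub>R v + Im z *\<^sub>R w))"
proof -
  have "has_bounded_variation_on_interval 0 1
      (\<lambda>t. Re (circle_param t) *\<^sub>R v + Im (circle_param t) *\<^sub>R w)"
    by (rule Lipschitz_bounded_variation(1)[OF circle_combination_Lipschitz]) simp
  then have "has_bounded_variation_on_interval 0 1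
      (\<lambda>t. (F \<circ> circle_param) t - (Re (circle_param t) *\<^sub>R v + Im (circle_param t) *\<^sub>R w))"
    by (rule bounded_variation_diff[rotated]) (use assms in \<open>simp add: CBV_circle_def comp_def\<close>)
  then show ?thesis
    using assms unfolding CBV_circle_def by (auto simp: o_def intro!: continuous_intros)
qed

lemma injective_approximation_circle:
  fixes F :: "complex \<Rightarrow> 'a::euclidean_space"
  assumes "2 < DIM('a)" "CBV_circle F" "0 < e"
  shows "\<exists>G. CBV_circle G \<and> inj_on G (sphere 0 1) \<and> bv_norm_circle (\<lambda>z. F z - G z) < e"
proof -
  have bv: "has_bounded_variation_on_interval 0 1 (F \<circ> circle_param)"
    using assms(2) by (simp add: CBV_circle_def)
  define C where "C = 1 + 2 * pi"
  have "0 < C"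
    unfolding C_def using pi_gt_zero by linarith
  define r where "r = e / (2 * C)"
  have "0 < r"
    unfolding r_def using assms(3) \<open>0 < C\<close> by simp
  obtain w where w: "norm w < r"
    "w \<notin> difference_quotients 0 1 (F \<circ> circle_param) (\<lambda>_ _. 0) (circle_increment Im)"
    using exists_small_not_in_negligible[OF negligible_circle_difference_quotients(1)[OF assms(1) bv]]
      \<open>0 < r\<close> by blast
  obtain v where v: "norm v < r"
    "v \<notin> difference_quotients 0 1 (F \<circ> circle_param)
            (\<lambda>t t'. circle_increment Im t t' *\<^sub>R w) (circle_increment Re)"
    using exists_small_not_in_negligible[OF negligible_circle_difference_quotients(2)[OF assms(1) bv]]
      \<open>0 < r\<close> by blast
  define G where "G z = F z - (Re z *\<^sub>R v + Im z *\<^sub>R w)" for z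
  have "CBV_circle G"
    unfolding G_def using assms(2) by (rule CBV_circle_diff_combination)
  moreover have "bv_norm_circle (\<lambda>z. F z - G z) < e"
  proof -
    have "(\<lambda>z. F z - G z) = (\<lambda>z. Re z *\<^sub>R v + Im z *\<^sub>R w)"
      by (simp add: G_def add.commute)
    then have "bv_norm_circle (\<lambda>z. F z - G z) \<le> C * (norm v + norm w)"
      unfolding C_def using bv_norm_circle_combination_le by simp
    also have "\<dots> < C * (2 * r)"
      using v(1) w(1) \<open>0 < C\<close> by (intro mult_strict_left_mono) linarith+
    also have "\<dots> = e"
      unfolding r_def using \<open>0 < C\<close> by (simp add: field_simps)
    finally show ?thesis .
  qed
  ultimately show ?thesis
    using inj_on_diff_circle_combination[OF w(2) v(2)] unfolding G_def by blast
qed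

theorem theorem3p5:
  fixes a b :: real
  assumes "a < b" and "CARD('n::finite) \<ge> 3"
  shows "(\<forall>F :: real \<Rightarrow> real^'n. CBV_interval a b F \<longrightarrow>
            (\<forall>e>0. \<exists>G :: real \<Rightarrow> real^'n. CBV_interval a b G \<and> inj_on G {a..b} \<and>
                      bv_norm_interval a b (\<lambda>t. F t - G t) < e))
       \<and> (\<forall>F :: complex \<Rightarrow> real^'n. CBV_circle F \<longrightarrow>
            (\<forall>e>0. \<exists>G :: complex \<Rightarrow> real^'n. CBV_circle G \<and> inj_on G (sphere 0 1) \<and>
                      bv_norm_circle (\<lambda>z. F z - G z) < e))"
proof -
  have "2 < DIM(real^'n)"
    using assms(2) by simp
  then show ?thesis
    using injective_approximation_interval[OF assms(1)] injective_approximation_circle by blast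
qed

end
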